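(* Let $G$ be a Polish group and let $\varphi,\psi\colon G \to [0,\infty]$ be arbitrary functions. Then for every $g \in G$, \[ (\varphi \diamond \psi)(g) \leq (U(\varphi) \diamond U(\psi))(g). \]
   Context: For functions $\varphi,\psi\colon G \to [0,\infty]$, define $(\varphi \diamond \psi)(x) = \inf_{h \in G} \bigl(\varphi(h) + \psi(h^{-1}x)\bigr)$. For $\varphi\colon G\to[0,\infty]$, $U(\varphi)$ denotes the pointwise infimum of all upper semi-continuous functions $\psi\colon G \to [0,\infty]$ such that the set $\{x \colon \varphi(x) > \psi(x)\}$ is meagre in $G$. *)

theory Defs
  imports "HOL-Analysis.Analysis" "HOL-Library.Extended_Nonnegative_Real"
begin

definition nowhere_dense :: "'a::topological_space set \<Rightarrow> bool" where
  "nowhere_dense A \<longleftrightarrow> interior (closure A) = {}"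

definition meagre :: "'a::topological_space set \<Rightarrow> bool" where
  "meagre A \<longleftrightarrow> (\<exists>F. countable F \<and> (\<forall>N\<in>F. nowhere_dense N) \<and> A \<subseteq> \<Union>F)"

definition usc :: "('a::topological_space \<Rightarrow> ennreal) \<Rightarrow> bool" where
  "usc f \<longleftrightarrow> (\<forall>c. open {x. f x < c})"

text \<open>Inf-convolution on a group written additively: h^{-1} x is - h + x.\<close>
definition diamond :: "('a::group_add \<Rightarrow> ennreal) \<Rightarrow> ('a \<Rightarrow> ennreal) \<Rightarrow> 'a \<Rightarrow> ennreal"
  (infixl "\<diamond>" 70) where
  "(\<phi> \<diamond> \<psi>) x = (INF h. \<phi> h + \<psi> (- h + x))"

definition U :: "('a::topological_space \<Rightarrow> ennreal) \<Rightarrow> 'a \<Rightarrow> ennreal" where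
  "U \<phi> x = (INF \<psi> \<in> {\<psi>. usc \<psi> \<and> meagre {y. \<phi> y > \<psi> y}}. \<psi> x)"

end

theory Submission
  imports Defs
begin

text \<open>Fix \<open>h\<close> with \<open>U \<phi> h < a\<close> and \<open>U \<psi> (-h + g) < b\<close>, witnessed by upper semicontinuous
  \<open>\<phi>', \<psi>'\<close> that dominate \<open>\<phi>, \<psi>\<close> off meagre sets. The set of \<open>x\<close> with \<open>\<phi>' x < a\<close> and
  \<open>\<psi>' (-x + g) < b\<close> is open and contains \<open>h\<close>; since \<open>x \<mapsto> -x + g\<close> is a homeomorphism, by
  the Baire category theorem it contains a point \<open>x\<close> outside both meagre exceptional sets,
  so \<open>(\<phi> \<diamond> \<psi>) g \<le> \<phi> x + \<psi> (-x + g) \<le> a + b\<close>. Letting \<open>a, b\<close> decrease gives the claim.\<close>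

lemma nowhere_dense_vimage_homeomorphism:
  assumes hom: "homeomorphism UNIV UNIV f f'" and N: "nowhere_dense N"
  shows "nowhere_dense (f -` N)"
proof -
  have cont: "continuous_on UNIV f" "continuous_on UNIV f'"
    and inv: "\<And>x. f' (f x) = x" "\<And>y. f (f' y) = y"
    using hom by (auto simp: homeomorphism_def)
  have "closed (f -` closure N)"
    using cont(1) by (simp add: continuous_on_closed_vimage)
  then have "closure (f -` N) \<subseteq> f -` closure N"
    by (meson closure_minimal closure_subset vimage_mono)
  moreover have "interior (f -` closure N) \<subseteq> f -` interior (closure N)"
  proof
    fix x assume "x \<in> interior (f -` closure N)"
    then obtain T where T: "open T" "x \<in> T" "T \<subseteq> f -` closure N"
      by (meson interiorE)
    have "open (f' -` T)"
      using cont(2) T(1) by (simp add: continuous_on_open_vimage)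
    moreover have "f x \<in> f' -` T" "f' -` T \<subseteq> closure N"
      using T inv by auto
    ultimately show "x \<in> f -` interior (closure N)"
      by (meson interiorI vimageI2)
  qed
  ultimately have "interior (closure (f -` N)) \<subseteq> f -` interior (closure N)"
    by (meson interior_mono order_trans)
  with N show ?thesis
    unfolding nowhere_dense_def by simp
qed

lemma meagre_vimage_homeomorphism:
  assumes "homeomorphism UNIV UNIV f f'" and "meagre M"
  shows "meagre (f -` M)"
proof -
  obtain F where F: "countable F" "\<forall>N\<in>F. nowhere_dense N" "M \<subseteq> \<Union>F"
    using \<open>meagre M\<close> unfolding meagre_def by auto
  have "countable ((-`) f ` F)" "\<forall>N\<in>(-`) f ` F. nowhere_dense N"
    using F nowhere_dense_vimage_homeomorphism[OF assms(1)] by auto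
  moreover have "f -` M \<subseteq> \<Union>((-`) f ` F)"
    using F(3) by blast
  ultimately show ?thesis
    unfolding meagre_def by blast
qed

lemma meagre_Un:
  assumes "meagre A" and "meagre B"
  shows "meagre (A \<union> B)"
proof -
  obtain F G where "countable F" "\<forall>N\<in>F. nowhere_dense N" "A \<subseteq> \<Union>F"
    and "countable G" "\<forall>N\<in>G. nowhere_dense N" "B \<subseteq> \<Union>G"
    using assms unfolding meagre_def by auto
  then show ?thesis
    unfolding meagre_def by (intro exI[of _ "F \<union> G"]) auto
qed

lemma open_not_subset_meagre:
  fixes S :: "'a::polish_space set"
  assumes "open S" "S \<noteq> {}" "meagre M"
  shows "\<not> S \<subseteq> M"
proof
  assume "S \<subseteq> M"
  obtain F where F: "countable F" "\<forall>N\<in>F. nowhere_dense N" "M \<subseteq> \<Union>F"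
    using assms(3) unfolding meagre_def by auto
  have "euclidean interior_of \<Union>(closure ` F) = {}"
    using F by (intro Baire_category_alt)
      (auto simp: completely_metrizable_space_euclidean nowhere_dense_def)
  moreover have "S \<subseteq> \<Union>(closure ` F)"
    using \<open>S \<subseteq> M\<close> F(3) closure_subset by blast
  then have "S \<subseteq> interior (\<Union>(closure ` F))"
    using assms(1) by (simp add: interior_maximal)
  ultimately show False
    using assms(2) by auto
qed

lemma homeomorphism_minus_add:
  fixes g :: "'a::topological_group_add"
  shows "homeomorphism UNIV UNIV (\<lambda>x. - x + g) (\<lambda>y. g + - y)"
  by (rule homeomorphismI) (auto intro!: continuous_intros simp: add.assoc minus_add image_iff)

lemma U_lessE:
  assumes "U \<phi> x < a"
  obtains \<phi>' where "usc \<phi>'" "meagre {y. \<phi> y > \<phi>' y}" "\<phi>' x < a"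
  using assms unfolding U_def by (auto simp: INF_less_iff)

lemma diamond_le_add_if_U_less:
  fixes \<phi> \<psi> :: "'a::{topological_group_add, polish_space} \<Rightarrow> ennreal"
  assumes "U \<phi> h < a" and "U \<psi> (- h + g) < b"
  shows "(\<phi> \<diamond> \<psi>) g \<le> a + b"
proof -
  obtain \<phi>' where \<phi>': "usc \<phi>'" "meagre {y. \<phi> y > \<phi>' y}" "\<phi>' h < a"
    using assms(1) by (rule U_lessE)
  obtain \<psi>' where \<psi>': "usc \<psi>'" "meagre {y. \<psi> y > \<psi>' y}" "\<psi>' (- h + g) < b"
    using assms(2) by (rule U_lessE)
  define f where "f x = - x + g" for x
  have hom: "homeomorphism UNIV UNIV f (\<lambda>y. g + - y)"
    unfolding f_def by (rule homeomorphism_minus_add)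
  define S where "S = {x. \<phi>' x < a} \<inter> f -` {y. \<psi>' y < b}"
  have "open S"
    using \<phi>'(1) \<psi>'(1) hom unfolding S_def usc_def homeomorphism_def
    by (intro open_Int) (auto simp: continuous_on_open_vimage)
  moreover have "h \<in> S"
    unfolding S_def f_def using \<phi>' \<psi>' by auto
  moreover have "meagre ({y. \<phi> y > \<phi>' y} \<union> f -` {y. \<psi> y > \<psi>' y})"
    using \<phi>'(2) meagre_vimage_homeomorphism[OF hom \<psi>'(2)] by (rule meagre_Un)
  ultimately obtain x where x: "x \<in> S" "x \<notin> {y. \<phi> y > \<phi>' y} \<union> f -` {y. \<psi> y > \<psi>' y}"
    using open_not_subset_meagre by blast
  have "(\<phi> \<diamond> \<psi>) g \<le> \<phi> x + \<psi> (- x + g)"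
    unfolding diamond_def by (rule INF_lower) simp
  also have "\<dots> \<le> a + b"
    using x unfolding S_def f_def by (intro add_mono) (auto simp: not_less)
  finally show ?thesis .
qed

lemma ennreal_le_add_if_le_strict_upper_bounds:
  fixes c x y :: ennreal
  assumes "\<And>a b. x < a \<Longrightarrow> y < b \<Longrightarrow> c \<le> a + b"
  shows "c \<le> x + y"
proof (rule ennreal_le_epsilon)
  fix e :: real
  assume "x + y < top" and "0 < e"
  then have "x < x + ennreal (e/2)" "y < y + ennreal (e/2)"
    by (auto simp: ennreal_add_left_cancel_less[where b = 0, simplified])
  then have "c \<le> (x + ennreal (e/2)) + (y + ennreal (e/2))"
    by (rule assms)
  also have "\<dots> = x + y + ennreal e"
    using \<open>0 < e\<close> by (simp add: ac_simps flip: ennreal_plus)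
  finally show "c \<le> x + y + ennreal e" .
qed

theorem proposition3p4:
  fixes \<phi> \<psi> :: "'a::{topological_group_add, polish_space} \<Rightarrow> ennreal"
    and g :: 'a
  shows "(\<phi> \<diamond> \<psi>) g \<le> (U \<phi> \<diamond> U \<psi>) g"
proof -
  have "(\<phi> \<diamond> \<psi>) g \<le> U \<phi> h + U \<psi> (- h + g)" for h
    by (rule ennreal_le_add_if_le_strict_upper_bounds) (rule diamond_le_add_if_U_less)
  then show ?thesis
    unfolding diamond_def[of "U \<phi>"] by (rule INF_greatest)
qed

end
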